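(* If $G_1$ and $G_2$ are vertex-disjoint semi-weakly CIS graphs, then their disjoint union $G_1+G_2$ and their join $G_1*G_2$ are also semi-weakly CIS.
   Context: A strong clique of a graph is a clique meeting every maximal stable set. A graph is semi-weakly CIS if it admits a family of strong cliques such that every two adjacent vertices lie together in some member of the family. The join $G_1*G_2$ is obtained from $G_1+G_2$ by adding all edges between $V(G_1)$ and $V(G_2)$. *)

theory Defs
  imports Main
begin

definition graph :: "'a set \<Rightarrow> 'a set set \<Rightarrow> bool" where
  "graph V E \<longleftrightarrow> finite V \<and> (\<forall>e\<in>E. e \<subseteq> V \<and> card e = 2)"

definition clique :: "'a set \<Rightarrow> 'a set set \<Rightarrow> 'a set \<Rightarrow> bool" where
  "clique V E C \<longleftrightarrow> C \<subseteq> V \<and> (\<forall>u\<in>C. \<forall>v\<in>C. u \<noteq> v \<longrightarrow> {u, v} \<in> E)"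

definition stable_set :: "'a set \<Rightarrow> 'a set set \<Rightarrow> 'a set \<Rightarrow> bool" where
  "stable_set V E S \<longleftrightarrow> S \<subseteq> V \<and> (\<forall>u\<in>S. \<forall>v\<in>S. {u, v} \<notin> E)"

definition maximal_stable_set :: "'a set \<Rightarrow> 'a set set \<Rightarrow> 'a set \<Rightarrow> bool" where
  "maximal_stable_set V E S \<longleftrightarrow> stable_set V E S \<and>
     (\<forall>T. stable_set V E T \<and> S \<subseteq> T \<longrightarrow> T = S)"

definition strong_clique :: "'a set \<Rightarrow> 'a set set \<Rightarrow> 'a set \<Rightarrow> bool" where
  "strong_clique V E C \<longleftrightarrow> clique V E C \<and>
     (\<forall>S. maximal_stable_set V E S \<longrightarrow> C \<inter> S \<noteq> {})"

definition semi_weakly_CIS :: "'a set \<Rightarrow> 'a set set \<Rightarrow> bool" where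
  "semi_weakly_CIS V E \<longleftrightarrow> (\<exists>\<C>. (\<forall>C\<in>\<C>. strong_clique V E C) \<and>
     (\<forall>u v. {u, v} \<in> E \<longrightarrow> (\<exists>C\<in>\<C>. u \<in> C \<and> v \<in> C)))"

definition join_edges :: "'a set \<Rightarrow> 'a set set \<Rightarrow> 'a set \<Rightarrow> 'a set set \<Rightarrow> 'a set set" where
  "join_edges V1 E1 V2 E2 = E1 \<union> E2 \<union> {{u, v} | u v. u \<in> V1 \<and> v \<in> V2}"

end

theory Submission
  imports Defs
begin

text \<open>
  Semi-weak CIS only asks that every edge lie in some strong clique, and every vertex of such a
  graph lies in a strong clique (an isolated vertex belongs to every maximal stable set, so it
  is one by itself). A maximal stable set of \<open>G\<^sub>1 + G\<^sub>2\<close> restricts to maximal stable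
  sets of both summands, so strong cliques of a summand stay strong. A maximal stable set
  of \<open>G\<^sub>1 * G\<^sub>2\<close> lies inside one side, where it is again maximal, so \<open>C\<^sub>1 \<union> C\<^sub>2\<close> is strong
  whenever \<open>C\<^sub>1\<close> and \<open>C\<^sub>2\<close> are; these unions cover all edges of the join.
\<close>

lemma graph_edge_in_vertices: "graph V E \<Longrightarrow> {u, v} \<in> E \<Longrightarrow> u \<in> V \<and> v \<in> V"
  unfolding graph_def by blast

lemma graph_no_edges_if_no_vertices: "graph {} E \<Longrightarrow> E = {}"
  unfolding graph_def by fastforce

lemma semi_weakly_CIS_iff_edges_in_strong_cliques:
  "semi_weakly_CIS V E \<longleftrightarrow>
     (\<forall>u v. {u, v} \<in> E \<longrightarrow> (\<exists>C. strong_clique V E C \<and> u \<in> C \<and> v \<in> C))"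
  unfolding semi_weakly_CIS_def
  by (rule iffI, blast) (rule exI[of _ "{C. strong_clique V E C}"], auto)

lemma stable_set_mono:
  "stable_set V E S \<Longrightarrow> S' \<subseteq> S \<Longrightarrow> S' \<subseteq> V' \<Longrightarrow> E' \<subseteq> E \<Longrightarrow> stable_set V' E' S'"
  unfolding stable_set_def by blast

lemma maximal_stable_set_contains_isolated:
  assumes max: "maximal_stable_set V E S" and "u \<in> V" and isolated: "\<forall>v. {u, v} \<notin> E"
  shows "u \<in> S"
proof -
  have "{v, u} \<notin> E" for v
    using isolated by (simp add: insert_commute[of v u])
  with max assms(2) isolated have "stable_set V E (insert u S)"
    unfolding maximal_stable_set_def stable_set_def by blast
  with max show ?thesis
    unfolding maximal_stable_set_def by blast
qed

lemma semi_weakly_CIS_vertex_in_strong_clique: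
  assumes "semi_weakly_CIS V E" and "u \<in> V"
  obtains C where "strong_clique V E C" and "u \<in> C"
proof (cases "\<exists>v. {u, v} \<in> E")
  case True
  with assms(1) that show ?thesis
    unfolding semi_weakly_CIS_iff_edges_in_strong_cliques by blast
next
  case False
  then have "u \<in> S" if "maximal_stable_set V E S" for S
    using maximal_stable_set_contains_isolated[OF that assms(2)] by blast
  with assms(2) have "strong_clique V E {u}"
    unfolding strong_clique_def clique_def by blast
  with that show ?thesis by blast
qed

lemma stable_set_disjoint_union:
  assumes "graph V1 E1" and "graph V2 E2" and "V1 \<inter> V2 = {}"
    and "stable_set V1 E1 A" and "stable_set V2 E2 B"
  shows "stable_set (V1 \<union> V2) (E1 \<union> E2) (A \<union> B)"
  unfolding stable_set_def
proof (intro conjI ballI)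
  show "A \<union> B \<subseteq> V1 \<union> V2"
    using assms(4,5) unfolding stable_set_def by blast
  fix x y assume xy: "x \<in> A \<union> B" "y \<in> A \<union> B"
  show "{x, y} \<notin> E1 \<union> E2"
  proof
    assume "{x, y} \<in> E1 \<union> E2"
    then show False
    proof
      assume "{x, y} \<in> E1"
      moreover from this have "x \<in> A \<and> y \<in> A"
        using xy graph_edge_in_vertices[OF assms(1)] assms(3,5) unfolding stable_set_def by blast
      ultimately show False
        using assms(4) unfolding stable_set_def by blast
    next
      assume "{x, y} \<in> E2"
      moreover from this have "x \<in> B \<and> y \<in> B"
        using xy graph_edge_in_vertices[OF assms(2)] assms(3,4) unfolding stable_set_def by blast
      ultimately show False
        using assms(5) unfolding stable_set_def by blast
    qed
  qed
qed

lemma maximal_stable_set_disjoint_union_restrict: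
  assumes g1: "graph V1 E1" and g2: "graph V2 E2" and disj: "V1 \<inter> V2 = {}"
    and max: "maximal_stable_set (V1 \<union> V2) (E1 \<union> E2) S"
  shows "maximal_stable_set V1 E1 (S \<inter> V1)"
  unfolding maximal_stable_set_def
proof (intro conjI allI impI)
  have S: "stable_set (V1 \<union> V2) (E1 \<union> E2) S"
    using max unfolding maximal_stable_set_def by blast
  then show "stable_set V1 E1 (S \<inter> V1)"
    by (rule stable_set_mono) auto
  fix T assume T: "stable_set V1 E1 T \<and> S \<inter> V1 \<subseteq> T"
  have "stable_set V2 E2 (S \<inter> V2)"
    using S by (rule stable_set_mono) auto
  with T have "stable_set (V1 \<union> V2) (E1 \<union> E2) (T \<union> S \<inter> V2)"
    using stable_set_disjoint_union[OF g1 g2 disj] by blast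
  moreover have "S \<subseteq> T \<union> S \<inter> V2"
    using S T unfolding stable_set_def by blast
  ultimately have "T \<union> S \<inter> V2 = S"
    using max unfolding maximal_stable_set_def by blast
  then show "T = S \<inter> V1"
    using T disj unfolding stable_set_def by blast
qed

lemma strong_clique_disjoint_union:
  assumes "graph V1 E1" and "graph V2 E2" and "V1 \<inter> V2 = {}"
    and "strong_clique V1 E1 C"
  shows "strong_clique (V1 \<union> V2) (E1 \<union> E2) C"
  using assms maximal_stable_set_disjoint_union_restrict[OF assms(1-3)]
  unfolding strong_clique_def clique_def by blast

lemma semi_weakly_CIS_disjoint_union:
  assumes g1: "graph V1 E1" and g2: "graph V2 E2" and disj: "V1 \<inter> V2 = {}"
    and "semi_weakly_CIS V1 E1" and "semi_weakly_CIS V2 E2"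
  shows "semi_weakly_CIS (V1 \<union> V2) (E1 \<union> E2)"
proof -
  have "strong_clique (V1 \<union> V2) (E1 \<union> E2) C" if "strong_clique V2 E2 C" for C
    using strong_clique_disjoint_union[OF g2 g1 _ that] disj by (simp add: Un_commute Int_commute)
  then show ?thesis
    using assms strong_clique_disjoint_union[OF g1 g2 disj]
    unfolding semi_weakly_CIS_iff_edges_in_strong_cliques by blast
qed

lemma join_edges_commute: "join_edges V2 E2 V1 E1 = join_edges V1 E1 V2 E2"
  unfolding join_edges_def by (blast intro: insert_commute)

lemma stable_set_join_in_one_side:
  "stable_set (V1 \<union> V2) (join_edges V1 E1 V2 E2) S \<Longrightarrow> S \<subseteq> V1 \<or> S \<subseteq> V2"
  unfolding stable_set_def join_edges_def by blast

lemma stable_set_join_of_left: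
  assumes "graph V2 E2" and "V1 \<inter> V2 = {}" and "stable_set V1 E1 S"
  shows "stable_set (V1 \<union> V2) (join_edges V1 E1 V2 E2) S"
  unfolding stable_set_def
proof (intro conjI ballI)
  have S: "S \<subseteq> V1" "\<And>x y. x \<in> S \<Longrightarrow> y \<in> S \<Longrightarrow> {x, y} \<notin> E1"
    using assms(3) unfolding stable_set_def by blast+
  then show "S \<subseteq> V1 \<union> V2" by blast
  fix x y assume xy: "x \<in> S" "y \<in> S"
  have "{x, y} \<notin> E2"
    using xy S(1) assms(2) graph_edge_in_vertices[OF assms(1)] by blast
  moreover have "{x, y} \<noteq> {u, v}" if "v \<in> V2" for u v
    using that xy S(1) assms(2) by (auto simp: doubleton_eq_iff)
  ultimately show "{x, y} \<notin> join_edges V1 E1 V2 E2"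
    using xy S(2) unfolding join_edges_def by blast
qed

lemma maximal_stable_set_join_left:
  assumes "graph V2 E2" and "V1 \<inter> V2 = {}"
    and max: "maximal_stable_set (V1 \<union> V2) (join_edges V1 E1 V2 E2) S" and "S \<subseteq> V1"
  shows "maximal_stable_set V1 E1 S"
  unfolding maximal_stable_set_def
proof (intro conjI allI impI)
  have "E1 \<subseteq> join_edges V1 E1 V2 E2"
    unfolding join_edges_def by blast
  moreover have "stable_set (V1 \<union> V2) (join_edges V1 E1 V2 E2) S"
    using max unfolding maximal_stable_set_def by blast
  ultimately show "stable_set V1 E1 S"
    using stable_set_mono assms(4) by blast
  fix T assume "stable_set V1 E1 T \<and> S \<subseteq> T"
  with max show "T = S"
    using stable_set_join_of_left[OF assms(1,2)] unfolding maximal_stable_set_def by blast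
qed

lemma clique_join:
  assumes "clique V1 E1 C1" and "clique V2 E2 C2"
  shows "clique (V1 \<union> V2) (join_edges V1 E1 V2 E2) (C1 \<union> C2)"
  unfolding clique_def
proof (intro conjI ballI impI)
  have C: "C1 \<subseteq> V1" "C2 \<subseteq> V2"
    and E: "\<And>x y. x \<in> C1 \<Longrightarrow> y \<in> C1 \<Longrightarrow> x \<noteq> y \<Longrightarrow> {x, y} \<in> E1"
      "\<And>x y. x \<in> C2 \<Longrightarrow> y \<in> C2 \<Longrightarrow> x \<noteq> y \<Longrightarrow> {x, y} \<in> E2"
    using assms unfolding clique_def by blast+
  then show "C1 \<union> C2 \<subseteq> V1 \<union> V2" by blast
  have cross: "{x, y} \<in> join_edges V1 E1 V2 E2 \<and> {y, x} \<in> join_edges V1 E1 V2 E2"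
    if "x \<in> C1" "y \<in> C2" for x y
    using that C unfolding join_edges_def by (blast intro: insert_commute)
  fix u v assume "u \<in> C1 \<union> C2" "v \<in> C1 \<union> C2" "u \<noteq> v"
  then show "{u, v} \<in> join_edges V1 E1 V2 E2"
    using E cross unfolding join_edges_def by blast
qed

lemma strong_clique_join:
  assumes g1: "graph V1 E1" and g2: "graph V2 E2" and disj: "V1 \<inter> V2 = {}"
    and C1: "strong_clique V1 E1 C1" and C2: "strong_clique V2 E2 C2"
  shows "strong_clique (V1 \<union> V2) (join_edges V1 E1 V2 E2) (C1 \<union> C2)"
  unfolding strong_clique_def
proof (intro conjI allI impI)
  show "clique (V1 \<union> V2) (join_edges V1 E1 V2 E2) (C1 \<union> C2)"
    using C1 C2 clique_join unfolding strong_clique_def by blast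
  fix S assume max: "maximal_stable_set (V1 \<union> V2) (join_edges V1 E1 V2 E2) S"
  then have max': "maximal_stable_set (V2 \<union> V1) (join_edges V2 E2 V1 E1) S"
    by (simp add: join_edges_commute Un_commute)
  from max have "S \<subseteq> V1 \<or> S \<subseteq> V2"
    unfolding maximal_stable_set_def by (blast dest: stable_set_join_in_one_side)
  then have "maximal_stable_set V1 E1 S \<or> maximal_stable_set V2 E2 S"
    using maximal_stable_set_join_left[OF g2 disj max]
      maximal_stable_set_join_left[OF g1 _ max'] disj by blast
  with C1 C2 show "(C1 \<union> C2) \<inter> S \<noteq> {}"
    unfolding strong_clique_def by blast
qed

lemma join_edges_empty_right: "join_edges V1 E1 {} {} = E1"
  unfolding join_edges_def by blast

lemma join_left_edge_in_strong_clique: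
  assumes g1: "graph V1 E1" and g2: "graph V2 E2" and disj: "V1 \<inter> V2 = {}"
    and cis1: "semi_weakly_CIS V1 E1" and cis2: "semi_weakly_CIS V2 E2"
    and edge: "{u, v} \<in> E1"
  shows "\<exists>C. strong_clique (V1 \<union> V2) (join_edges V1 E1 V2 E2) C \<and> u \<in> C \<and> v \<in> C"
proof (cases "V2 = {}")
  \<comment> \<open>The empty graph has no strong clique: \<open>{}\<close> is its maximal stable set.\<close>
  case True
  with g2 have "E2 = {}" by (simp add: graph_no_edges_if_no_vertices)
  with True cis1 edge show ?thesis
    by (simp add: join_edges_empty_right semi_weakly_CIS_iff_edges_in_strong_cliques)
next
  case False
  then obtain b where "b \<in> V2" by blast
  with cis2 obtain D where D: "strong_clique V2 E2 D"
    by (blast elim: semi_weakly_CIS_vertex_in_strong_clique)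
  from cis1 edge obtain C where "strong_clique V1 E1 C" "u \<in> C" "v \<in> C"
    unfolding semi_weakly_CIS_iff_edges_in_strong_cliques by blast
  with D show ?thesis
    using strong_clique_join[OF g1 g2 disj] by blast
qed

lemma semi_weakly_CIS_join:
  assumes g1: "graph V1 E1" and g2: "graph V2 E2" and disj: "V1 \<inter> V2 = {}"
    and cis1: "semi_weakly_CIS V1 E1" and cis2: "semi_weakly_CIS V2 E2"
  shows "semi_weakly_CIS (V1 \<union> V2) (join_edges V1 E1 V2 E2)"
  unfolding semi_weakly_CIS_iff_edges_in_strong_cliques
proof (intro allI impI)
  fix u v assume "{u, v} \<in> join_edges V1 E1 V2 E2"
  then consider "{u, v} \<in> E1" | "{u, v} \<in> E2"
    | x y where "{u, v} = {x, y}" "x \<in> V1" "y \<in> V2"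
    unfolding join_edges_def by blast
  then show "\<exists>C. strong_clique (V1 \<union> V2) (join_edges V1 E1 V2 E2) C \<and> u \<in> C \<and> v \<in> C"
  proof cases
    case 1
    then show ?thesis
      using join_left_edge_in_strong_clique[OF assms] by blast
  next
    case 2
    from disj have "V2 \<inter> V1 = {}" by blast
    from join_left_edge_in_strong_clique[OF g2 g1 this cis2 cis1 2] show ?thesis
      by (simp add: join_edges_commute Un_commute)
  next
    case (3 x y)
    obtain Cx where "strong_clique V1 E1 Cx" "x \<in> Cx"
      using cis1 \<open>x \<in> V1\<close> by (rule semi_weakly_CIS_vertex_in_strong_clique)
    moreover obtain Cy where "strong_clique V2 E2 Cy" "y \<in> Cy"
      using cis2 \<open>y \<in> V2\<close> by (rule semi_weakly_CIS_vertex_in_strong_clique)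
    ultimately show ?thesis
      using strong_clique_join[OF g1 g2 disj] \<open>{u, v} = {x, y}\<close>
      by (blast dest: doubleton_eq_iff[THEN iffD1])
  qed
qed

theorem proposition15:
  assumes "graph V1 E1" and "graph V2 E2" and "V1 \<inter> V2 = {}"
    and "semi_weakly_CIS V1 E1" and "semi_weakly_CIS V2 E2"
  shows "semi_weakly_CIS (V1 \<union> V2) (E1 \<union> E2) \<and>
    semi_weakly_CIS (V1 \<union> V2) (join_edges V1 E1 V2 E2)"
  using semi_weakly_CIS_disjoint_union[OF assms] semi_weakly_CIS_join[OF assms] by blast

end
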